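(* Let $k,q\ge0$, $p=k+q$, $m=2^p$, $n=2^q$, and $U_m=\frac{1}{\sqrt{2^p}}H(2^p)$. Fix $c$ with $0\le c\le 2^k-1$ and inject $n$ identical bosons in the input state $\vec s=(1+nc,2+nc,\dots,n+nc)$. Then an output state $\vec t=(t_1,\dots,t_n)$ is suppressed if and only if $\beta_q(t_1-1)\oplus\beta_q(t_2-1)\oplus\dots\oplus\beta_q(t_n-1)\neq0$, where $\beta_q(x)$ denotes the $q$ least significant bits of the binary representation of $x$ (equivalently, the $q$-bit binary representation of $x\bmod 2^q$).
   Context: For $m=2^p$, the Sylvester matrix $H(m)$ is defined recursively by $H(1)=[1]$ and $H(2^p)=\begin{bmatrix}H(2^{p-1})&H(2^{p-1})\\ H(2^{p-1})&-H(2^{p-1})\end{bmatrix}$, rows and columns indexed $1,\dots,m$. $\oplus$ denotes bitwise XOR. An $n$-particle state on $m$ modes is a nondecreasing tuple $\vec t=(t_1\le\dots\le t_n)$ with $t_i\in\{1,\dots,m\}$; $\mu_k(\vec t)=|\{i:t_i=k\}|$. For input $\vec s$ and output $\vec t$, the scattering matrix is $S_{i,j}=U_{t_i,s_j}$, and the bosonic amplitude is $\mathrm{perm}\,S/\sqrt{\prod_k\mu_k(\vec s)!\prod_k\mu_k(\vec t)!}$, where $\mathrm{perm}\,A=\sum_{\sigma\in S_n}\prod_i a_{i,\sigma(i)}$. An output state is suppressed if its amplitude is zero. *)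

theory Defs
  imports "HOL-Combinatorics.Permutations" Complex_Main
begin

text \<open>Sylvester matrix H(2^p), rows/columns indexed 1..2^p (entries outside are irrelevant).\<close>
fun sylvester :: "nat \<Rightarrow> nat \<Rightarrow> nat \<Rightarrow> real" where
  "sylvester 0 i j = 1"
| "sylvester (Suc p) i j =
     (if i \<le> 2^p then
        (if j \<le> 2^p then sylvester p i j else sylvester p i (j - 2^p))
      else
        (if j \<le> 2^p then sylvester p (i - 2^p) j else - sylvester p (i - 2^p) (j - 2^p)))"

definition U_had :: "nat \<Rightarrow> nat \<Rightarrow> nat \<Rightarrow> real" where
  "U_had p i j = sylvester p i j / sqrt (2 ^ p)"

definition perm_mat :: "nat \<Rightarrow> (nat \<Rightarrow> nat \<Rightarrow> real) \<Rightarrow> real" where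
  "perm_mat n A = (\<Sum>\<sigma> | \<sigma> permutes {..<n}. \<Prod>i<n. A i (\<sigma> i))"

text \<open>An n-particle state on m modes: nondecreasing tuple (list) with entries in 1..m.\<close>
definition is_state :: "nat \<Rightarrow> nat \<Rightarrow> nat list \<Rightarrow> bool" where
  "is_state m n t \<longleftrightarrow> length t = n \<and> sorted t \<and> set t \<subseteq> {1..m}"

definition occ :: "nat list \<Rightarrow> nat \<Rightarrow> nat" where
  "occ t k = count_list t k"

definition scatter :: "(nat \<Rightarrow> nat \<Rightarrow> real) \<Rightarrow> nat list \<Rightarrow> nat list \<Rightarrow> nat \<Rightarrow> nat \<Rightarrow> real" where
  "scatter U s t i j = U (t ! i) (s ! j)"

definition amplitude :: "nat \<Rightarrow> (nat \<Rightarrow> nat \<Rightarrow> real) \<Rightarrow> nat list \<Rightarrow> nat list \<Rightarrow> real" where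
  "amplitude m U s t = perm_mat (length s) (scatter U s t) /
     sqrt (real ((\<Prod>k\<in>{1..m}. fact (occ s k)) * (\<Prod>k\<in>{1..m}. fact (occ t k))))"

definition suppressed :: "nat \<Rightarrow> (nat \<Rightarrow> nat \<Rightarrow> real) \<Rightarrow> nat list \<Rightarrow> nat list \<Rightarrow> bool" where
  "suppressed m U s t \<longleftrightarrow> amplitude m U s t = 0"

definition beta :: "nat \<Rightarrow> nat \<Rightarrow> nat" where
  "beta q x = x mod 2 ^ q"

definition xor_list :: "nat list \<Rightarrow> nat" where
  "xor_list xs = foldr (\<lambda>x acc. Bit_Operations.xor x acc) xs 0"

end

theory Submission
  imports Defs
begin

(*
  The Sylvester entry H(i, j) is the Walsh character walsh (i - 1) (j - 1), i.e. (-1) to the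
  number of common one-bits.  For the input s every column index has high bits c, so the
  scattering matrix is, up to nonzero row factors, the n x n table walsh x_i j (j < n = 2^q)
  with x_i = beta_q (t_i - 1), and the amplitude vanishes iff this permanent does.

  If bit l < q of the XOR of the x_i is set, XOR-ing every column index with 2^l permutes the
  terms of the permanent and multiplies each by (-1)^(odd), so the permanent is 0.  If the XOR
  vanishes, expanding along the two halves of the columns pairs complementary row sets with
  equal terms, kills the row sets that are unbalanced in a low bit, and leaves an odd number of
  balanced ones; by induction on q the permanent is 2^(2^q - 1) times an odd number.  The odd
  count comes from double counting and the oddness of binomial(2^q + m, m) for m < 2^q.
*)

section \<open>Walsh characters\<close>

lemma bit_imp_less_exp_nat: "(x::nat) < 2 ^ q \<Longrightarrow> bit x l \<Longrightarrow> l < q"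
  by (metis bit_take_bit_iff take_bit_nat_eq_self)

lemma finite_bit_set_nat: "finite {l. bit (a::nat) l}"
proof (rule finite_subset)
  show "{l. bit a l} \<subseteq> {..<a}"
    using bit_imp_less_exp_nat[OF less_exp[of a]] by blast
qed simp

lemma xor_less_exp_nat:
  fixes x y :: nat
  assumes "x < 2 ^ q" "y < 2 ^ q"
  shows "xor x y < 2 ^ q"
proof -
  have "take_bit q (xor x y) = xor x y"
    using assms by (simp add: take_bit_nat_eq_self)
  then show ?thesis
    by (simp only: take_bit_nat_eq_self_iff)
qed

lemma card_sym_diff_parity:
  assumes "finite A" "finite B"
  shows "(-1::int) ^ card ((A \<union> B) - (A \<inter> B)) = (-1) ^ card A * (-1) ^ card B"
proof -
  have "card ((A \<union> B) - (A \<inter> B)) = card (A \<union> B) - card (A \<inter> B)"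
    using assms by (intro card_Diff_subset) auto
  moreover have "card (A \<inter> B) \<le> card (A \<union> B)"
    using assms by (intro card_mono) auto
  ultimately have "card A + card B = card ((A \<union> B) - (A \<inter> B)) + 2 * card (A \<inter> B)"
    using card_Un_Int[OF assms] by simp
  then show ?thesis
    by (metis (no_types) power_add neg_one_even_power even_mult_iff even_numeral mult_1_right)
qed

definition walsh :: "nat \<Rightarrow> nat \<Rightarrow> int" where
  "walsh a b = (-1) ^ card {l. bit a l \<and> bit b l}"

lemma walsh_neq_0: "walsh a b \<noteq> 0"
  by (simp add: walsh_def)

lemma walsh_0_left [simp]: "walsh 0 b = 1"
  and walsh_0_right [simp]: "walsh a 0 = 1"
  by (simp_all add: walsh_def)

lemma walsh_xor_right: "walsh a (xor b c) = walsh a b * walsh a c"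
proof -
  let ?P = "{l. bit a l \<and> bit b l}" and ?Q = "{l. bit a l \<and> bit c l}"
  have fin: "finite ?P" "finite ?Q"
    by (auto intro: finite_subset[OF _ finite_bit_set_nat[of a]])
  have "{l. bit a l \<and> bit (xor b c) l} = (?P \<union> ?Q) - (?P \<inter> ?Q)"
    by (auto simp: bit_xor_iff)
  then show ?thesis
    unfolding walsh_def using card_sym_diff_parity[OF fin] by simp
qed

lemma walsh_exp_right: "walsh a (2 ^ l) = (if bit a l then -1 else 1)"
proof -
  have "{l'. bit a l' \<and> bit ((2::nat) ^ l) l'} = (if bit a l then {l} else {})"
    by (auto simp: bit_exp_iff)
  then show ?thesis by (simp add: walsh_def)
qed

lemma walsh_add_exp_right:
  assumes "b < 2 ^ q"
  shows "walsh a (2 ^ q + b) = walsh a (2 ^ q) * walsh a b"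
proof -
  have "\<not> bit b q"
    using bit_imp_less_exp_nat[OF assms] by blast
  then have "and (2 ^ q) b = (0::nat)"
    by (intro bit_eqI) (auto simp: bit_and_iff bit_exp_iff)
  then show ?thesis by (simp add: disjunctive_add_eq_xor walsh_xor_right)
qed

lemma walsh_mod_div:
  "walsh a b = walsh (a mod 2 ^ q) (b mod 2 ^ q) * walsh (a div 2 ^ q) (b div 2 ^ q)"
proof -
  let ?S = "{l. bit a l \<and> bit b l}"
  have fin: "finite ?S"
    by (auto intro: finite_subset[OF _ finite_bit_set_nat[of a]])
  have low: "{l \<in> ?S. l < q} = {l. bit (a mod 2 ^ q) l \<and> bit (b mod 2 ^ q) l}"
    by (auto simp: bit_take_bit_iff simp flip: take_bit_eq_mod)
  have "{l \<in> ?S. \<not> l < q} = (+) q ` {l. bit (a div 2 ^ q) l \<and> bit (b div 2 ^ q) l}"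
  proof (intro set_eqI iffI)
    fix l assume "l \<in> {l \<in> ?S. \<not> l < q}"
    then show "l \<in> (+) q ` {l. bit (a div 2 ^ q) l \<and> bit (b div 2 ^ q) l}"
      by (intro image_eqI[of _ _ "l - q"]) (auto simp: bit_drop_bit_eq simp flip: drop_bit_eq_div)
  qed (auto simp: bit_drop_bit_eq simp flip: drop_bit_eq_div)
  then have high: "card {l \<in> ?S. \<not> l < q} = card {l. bit (a div 2 ^ q) l \<and> bit (b div 2 ^ q) l}"
    by (simp add: card_image)
  have "card ?S = card ({l \<in> ?S. l < q} \<union> {l \<in> ?S. \<not> l < q})"
    by (rule arg_cong[where f = card]) auto
  also have "\<dots> = card {l \<in> ?S. l < q} + card {l \<in> ?S. \<not> l < q}"
    using fin by (intro card_Un_disjoint finite_subset[OF _ fin]) auto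
  finally have "card ?S = card {l \<in> ?S. l < q} + card {l \<in> ?S. \<not> l < q}" .
  then show ?thesis
    unfolding walsh_def low high by (simp add: power_add)
qed

lemma sylvester_eq_walsh:
  assumes "1 \<le> i" "i \<le> 2 ^ p" "1 \<le> j" "j \<le> 2 ^ p"
  shows "sylvester p i j = walsh (i - 1) (j - 1)"
  using assms
proof (induction p arbitrary: i j)
  case (Suc p)
  have half: "(x - 1) div 2 ^ p = (if x \<le> 2 ^ p then 0 else 1) \<and>
      (x - 1) mod 2 ^ p = (if x \<le> 2 ^ p then x else x - 2 ^ p) - 1"
    if "1 \<le> x" "x \<le> 2 ^ Suc p" for x :: nat
  proof (cases "x \<le> 2 ^ p")
    case False
    define y where "y = x - 2 ^ p - 1"
    have "x - 1 = y + 2 ^ p" "y < 2 ^ p"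
      using False that by (auto simp: y_def)
    then have "(x - 1) div 2 ^ p = 1" "(x - 1) mod 2 ^ p = y"
      by simp_all
    then show ?thesis
      using False by (simp add: y_def)
  qed (use that in simp)
  have walsh_1_1: "walsh 1 1 = -1"
    using walsh_exp_right[of 1 0] by (simp add: bit_iff_odd)
  show ?case
    using Suc.prems half[of i] half[of j] walsh_mod_div[of "i - 1" "j - 1" p] walsh_1_1
    by (cases "i \<le> 2 ^ p"; cases "j \<le> 2 ^ p") (simp_all add: Suc.IH)
qed simp

section \<open>Sums over bijections\<close>

definition bijs :: "'a set \<Rightarrow> 'b set \<Rightarrow> ('a \<Rightarrow> 'b) set" where
  "bijs A B = {f \<in> A \<rightarrow>\<^sub>E B. bij_betw f A B}"

lemma finite_bijs [simp]: "finite A \<Longrightarrow> finite B \<Longrightarrow> finite (bijs A B)"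
  unfolding bijs_def by (rule finite_subset[OF _ finite_PiE[of A "\<lambda>_. B"]]) auto

lemma bijs_singleton: "bijs {a} {b} = {restrict (\<lambda>_. b) {a}}"
  by (auto simp: bijs_def bij_betw_def PiE_def extensional_def fun_eq_iff)

lemma restrict_in_bijs:
  assumes "bij_betw f A B"
  shows "restrict f A \<in> bijs A B"
proof -
  have "bij_betw (restrict f A) A B"
    using assms by (rule bij_betw_cong[THEN iffD1, rotated]) simp
  then show ?thesis
    by (auto simp: bijs_def bij_betw_def)
qed

lemma restrict_comp_in_bijs:
  assumes "bij_betw h B C" "f \<in> bijs A B"
  shows "restrict (h \<circ> f) A \<in> bijs A C"
  using assms by (intro restrict_in_bijs bij_betw_trans[of f A B h C]) (auto simp: bijs_def)

lemma bij_betw_compose_bijs: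
  assumes "bij_betw h B C"
  shows "bij_betw (\<lambda>f. restrict (h \<circ> f) A) (bijs A B) (bijs A C)"
proof (rule bij_betw_byWitness[where f' = "\<lambda>g. restrict (inv_into B h \<circ> g) A"])
  have inv: "bij_betw (inv_into B h) C B"
    using assms by (rule bij_betw_inv_into)
  show "\<forall>f\<in>bijs A B. restrict (inv_into B h \<circ> restrict (h \<circ> f) A) A = f"
    using assms by (auto simp: bijs_def bij_betw_def PiE_def extensional_def fun_eq_iff)
  show "\<forall>g\<in>bijs A C. restrict (h \<circ> restrict (inv_into B h \<circ> g) A) A = g"
    using assms by (auto simp: bijs_def bij_betw_def PiE_def Pi_iff extensional_def fun_eq_iff
        f_inv_into_f)
  show "(\<lambda>f. restrict (h \<circ> f) A) ` bijs A B \<subseteq> bijs A C"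
    using assms by (auto intro: restrict_comp_in_bijs)
  show "(\<lambda>g. restrict (inv_into B h \<circ> g) A) ` bijs A C \<subseteq> bijs A B"
    using inv by (auto intro: restrict_comp_in_bijs)
qed

lemma bij_betw_preimage:
  assumes "bij_betw f A (B \<union> C)" "B \<inter> C = {}"
  shows "bij_betw f {x \<in> A. f x \<in> B} B"
  using assms by (intro bij_betw_subset[OF assms(1)]) (auto simp: bij_betw_def)

text \<open>Laplace expansion of a permanent along a partition \<open>B \<union> C\<close> of the columns.\<close>
lemma sum_bijs_Un:
  fixes F :: "'a \<Rightarrow> 'b \<Rightarrow> 'c::comm_semiring_1"
  assumes "finite A" "finite B" "finite C" "B \<inter> C = {}"
  shows "(\<Sum>f\<in>bijs A (B \<union> C). \<Prod>x\<in>A. F x (f x)) =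
    (\<Sum>A1 | A1 \<subseteq> A \<and> card A1 = card B.
       (\<Sum>f\<in>bijs A1 B. \<Prod>x\<in>A1. F x (f x)) * (\<Sum>g\<in>bijs (A - A1) C. \<Prod>x\<in>A - A1. F x (g x)))"
proof -
  let ?S = "{A1. A1 \<subseteq> A \<and> card A1 = card B}"
  let ?T = "Sigma ?S (\<lambda>A1. bijs A1 B \<times> bijs (A - A1) C)"
  let ?h = "\<lambda>(A1, f, g). (\<Prod>x\<in>A1. F x (f x)) * (\<Prod>x\<in>A - A1. F x (g x))"
  let ?split = "\<lambda>f. ({x \<in> A. f x \<in> B}, restrict f {x \<in> A. f x \<in> B},
    restrict f (A - {x \<in> A. f x \<in> B}))"
  let ?merge = "\<lambda>(A1, f, g) x. if x \<in> A1 then f x else g x"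
  have fin_S: "finite ?S"
    using assms(1) by (rule finite_subset[rotated, OF finite_Pow_iff[THEN iffD2]]) auto
  have "(\<Sum>A1\<in>?S. (\<Sum>f\<in>bijs A1 B. \<Prod>x\<in>A1. F x (f x)) * (\<Sum>g\<in>bijs (A - A1) C. \<Prod>x\<in>A - A1. F x (g x)))
      = (\<Sum>A1\<in>?S. \<Sum>fg\<in>bijs A1 B \<times> bijs (A - A1) C. ?h (A1, fg))"
    using assms by (intro sum.cong refl)
      (auto simp: sum_product sum.cartesian_product split_beta intro: finite_subset)
  also have "\<dots> = (\<Sum>t\<in>?T. ?h t)"
    using fin_S assms by (subst sum.Sigma)
      (auto intro!: finite_cartesian_product finite_bijs intro: finite_subset[OF _ assms(1)])
  also have "\<dots> = (\<Sum>f\<in>bijs A (B \<union> C). \<Prod>x\<in>A. F x (f x))"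
  proof (rule sym, rule sum.reindex_bij_witness[where i = ?merge and j = ?split])
    fix f assume "f \<in> bijs A (B \<union> C)"
    then have f: "f \<in> A \<rightarrow>\<^sub>E B \<union> C" "bij_betw f A (B \<union> C)"
      by (auto simp: bijs_def)
    have AC: "A - {x \<in> A. f x \<in> B} = {x \<in> A. f x \<in> C}"
      using f(1) assms(4) by auto
    have bB: "bij_betw f {x \<in> A. f x \<in> B} B"
      using f(2) assms(4) by (rule bij_betw_preimage)
    have bC: "bij_betw f {x \<in> A. f x \<in> C} C"
      using bij_betw_preimage[of f A C B] f(2) assms(4) by (simp add: Un_commute Int_commute)
    show "?merge (?split f) = f"
      using f(1) by (auto simp: fun_eq_iff PiE_def extensional_def)
    have "restrict f (A - {x \<in> A. f x \<in> B}) \<in> bijs (A - {x \<in> A. f x \<in> B}) C"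
      unfolding AC by (rule restrict_in_bijs[OF bC])
    then show "?split f \<in> ?T"
      using restrict_in_bijs[OF bB] bij_betw_same_card[OF bB] by auto
    have "?h (?split f) = (\<Prod>x\<in>{x \<in> A. f x \<in> B}. F x (f x)) * (\<Prod>x\<in>A - {x \<in> A. f x \<in> B}. F x (f x))"
      by (auto intro!: arg_cong2[where f = times] prod.cong)
    also have "\<dots> = (\<Prod>x\<in>A. F x (f x))"
      using assms(1) by (subst mult.commute, intro prod.subset_diff[symmetric]) auto
    finally show "?h (?split f) = (\<Prod>x\<in>A. F x (f x))" .
  next
    fix t assume "t \<in> ?T"
    then obtain A1 f g where t: "t = (A1, f, g)" "A1 \<subseteq> A"
        and f: "f \<in> A1 \<rightarrow>\<^sub>E B" "bij_betw f A1 B"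
        and g: "g \<in> A - A1 \<rightarrow>\<^sub>E C" "bij_betw g (A - A1) C"
      by (auto simp: bijs_def)
    have A1: "{x \<in> A. ?merge t x \<in> B} = A1"
      using t f g assms(4) by (auto simp: PiE_def Pi_def)
    show "?split (?merge t) = t"
      unfolding A1 using t f g by (auto simp: fun_eq_iff PiE_def extensional_def)
    have "bij_betw (?merge t) (A1 \<union> (A - A1)) (B \<union> C)"
      using f(2) g(2) assms(4) unfolding t
      by (intro bij_betw_combine) (auto intro: bij_betw_cong[THEN iffD1, rotated])
    moreover have "A1 \<union> (A - A1) = A"
      using t by auto
    ultimately show "?merge t \<in> bijs A (B \<union> C)"
      using t f g by (auto simp: bijs_def PiE_def Pi_def extensional_def)
  qed
  finally show ?thesis ..
qed

section \<open>Parity and counting\<close>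

lemma prod_minus_one_if:
  assumes "finite A"
  shows "(\<Prod>x\<in>A. if P x then -1 else 1 :: 'a::comm_ring_1) = (-1) ^ card {x \<in> A. P x}"
  using assms by (simp add: prod.If_cases Collect_conj_eq Int_commute)

lemma even_sum_iff_even_card_odd:
  fixes f :: "'a \<Rightarrow> 'b::semiring_parity"
  assumes "finite A"
  shows "even (sum f A) \<longleftrightarrow> even (card {x \<in> A. odd (f x)})"
  using assms
proof (induction A rule: finite_induct)
  case (insert a A)
  have "{x \<in> insert a A. odd (f x)} = (if odd (f a) then insert a {x \<in> A. odd (f x)} else {x \<in> A. odd (f x)})"
    by auto
  with insert show ?case
    by simp
qed simp

lemma sum_odd_multiples:
  fixes f :: "'a \<Rightarrow> int"
  assumes "finite S" "odd (card S)" "\<And>x. x \<in> S \<Longrightarrow> \<exists>w. odd w \<and> f x = c * w"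
  shows "\<exists>w. odd w \<and> sum f S = c * w"
proof -
  obtain w where w: "\<And>x. x \<in> S \<Longrightarrow> odd (w x) \<and> f x = c * w x"
    using assms(3) by metis
  have "{x \<in> S. odd (w x)} = S"
    using w by auto
  then have "odd (sum w S)"
    using even_sum_iff_even_card_odd[OF assms(1), of w] assms(2) by simp
  moreover have "sum f S = c * sum w S"
    using w by (simp add: sum_distrib_left)
  ultimately show ?thesis
    by blast
qed

lemma sum_card_Int_eq_sum_card:
  fixes F :: "'a set set"
  assumes "finite F" "finite S"
  shows "(\<Sum>X\<in>F. card (X \<inter> S)) = (\<Sum>x\<in>S. card {X \<in> F. x \<in> X})"
proof -
  have "(\<Sum>X\<in>F. card (X \<inter> S)) = (\<Sum>X\<in>F. \<Sum>x\<in>S. if x \<in> X then 1 else 0)"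
    using assms(2) by (intro sum.cong refl) (simp add: sum.If_cases Int_commute)
  also have "\<dots> = (\<Sum>x\<in>S. \<Sum>X\<in>F. if x \<in> X then 1 else 0)"
    by (rule sum.swap)
  also have "\<dots> = (\<Sum>x\<in>S. card {X \<in> F. x \<in> X})"
    using assms(1) by (simp add: sum.If_cases Collect_conj_eq Int_commute)
  finally show ?thesis .
qed

lemma even_exp_choose:
  assumes "0 < j" "j < 2 ^ q"
  shows "even ((2::nat) ^ q choose j)"
proof (rule ccontr)
  assume odd: "odd ((2::nat) ^ q choose j)"
  have "(2::nat) ^ q dvd j * (2 ^ q choose j)"
    using times_binomial_minus1_eq[OF assms(1), of "2 ^ q"] by (metis dvd_triv_left)
  moreover have "coprime ((2::nat) ^ q) (2 ^ q choose j)"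
    using odd by simp
  ultimately have "(2::nat) ^ q dvd j"
    by (simp add: coprime_dvd_mult_left_iff)
  with assms show False
    by (auto dest: dvd_imp_le)
qed

text \<open>By Vandermonde, all terms but the first of \<open>(2^q + m choose m)\<close> are even.\<close>
lemma odd_exp_add_choose:
  assumes "m < 2 ^ q"
  shows "odd ((2::nat) ^ q + m choose m)"
proof (cases m)
  case (Suc m')
  have "2 ^ q + m choose m = (\<Sum>k\<le>m. (2 ^ q choose k) * (m choose (m - k)))"
    by (simp add: vandermonde)
  also have "\<dots> = 1 + (\<Sum>i\<le>m'. (2 ^ q choose Suc i) * (m choose (m - Suc i)))"
    unfolding Suc by (subst sum.atMost_Suc_shift) simp
  moreover have "even (\<Sum>i\<le>m'. (2 ^ q choose Suc i) * (m choose (m - Suc i)))"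
    using assms Suc by (intro dvd_sum) (simp add: even_exp_choose)
  ultimately show ?thesis
    by simp
qed simp

lemma odd_card_half_supersets:
  assumes "finite A" "card A = 2 * 2 ^ q" "U \<subseteq> A" "U \<noteq> {}" "card U \<le> 2 ^ q"
  shows "odd (card {A1. U \<subseteq> A1 \<and> A1 \<subseteq> A \<and> card A1 = 2 ^ q})"
proof -
  let ?F = "{A1. U \<subseteq> A1 \<and> A1 \<subseteq> A \<and> card A1 = 2 ^ q}"
  let ?k = "2 ^ q - card U"
  let ?G = "{B. B \<subseteq> A - U \<and> card B = ?k}"
  have fin_U: "finite U"
    using assms(1,3) by (rule finite_subset[rotated])
  have "bij_betw (\<lambda>A1. A1 - U) ?F ?G"
  proof (rule bij_betw_byWitness[where f' = "\<lambda>B. B \<union> U"])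
    show "\<forall>A1\<in>?F. A1 - U \<union> U = A1" "\<forall>B\<in>?G. B \<union> U - U = B"
      by auto
    show "(\<lambda>A1. A1 - U) ` ?F \<subseteq> ?G"
      using fin_U by (auto simp: card_Diff_subset)
    show "(\<lambda>B. B \<union> U) ` ?G \<subseteq> ?F"
    proof clarify
      fix B assume B: "B \<subseteq> A - U" "card B = ?k"
      then have "card (B \<union> U) = card B + card U"
        using fin_U B(1) by (intro card_Un_disjoint) (auto intro: finite_subset[OF _ assms(1)])
      with B assms(3,5) show "U \<subseteq> B \<union> U \<and> B \<union> U \<subseteq> A \<and> card (B \<union> U) = 2 ^ q"
        by auto
    qed
  qed
  then have "card ?F = card (A - U) choose ?k"
    using assms(1) by (simp add: bij_betw_same_card n_subsets)
  also have "card (A - U) = 2 ^ q + ?k"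
    using assms fin_U by (simp add: card_Diff_subset)
  finally show ?thesis
    using assms(4,5) fin_U odd_exp_add_choose[of ?k q] by (simp add: card_gt_0_iff)
qed

lemma sum_half_subsets_complement:
  fixes T :: "'a set \<Rightarrow> 'b::comm_semiring_1"
  assumes "finite A" "card A = 2 * n" "a \<in> A"
    and "\<And>A1. A1 \<subseteq> A \<Longrightarrow> T (A - A1) = T A1"
  shows "(\<Sum>A1 | A1 \<subseteq> A \<and> card A1 = n. T A1) = 2 * (\<Sum>A1 | A1 \<subseteq> A \<and> card A1 = n \<and> a \<in> A1. T A1)"
proof -
  let ?In = "{A1. A1 \<subseteq> A \<and> card A1 = n \<and> a \<in> A1}"
  let ?Out = "{A1. A1 \<subseteq> A \<and> card A1 = n \<and> a \<notin> A1}"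
  have fin: "finite ?In" "finite ?Out"
    using assms(1) by (auto intro: finite_subset[of _ "Pow A"])
  have "{A1. A1 \<subseteq> A \<and> card A1 = n} = ?In \<union> ?Out"
    by auto
  then have "(\<Sum>A1 | A1 \<subseteq> A \<and> card A1 = n. T A1) = sum T ?In + sum T ?Out"
    using fin by (simp add: sum.union_disjoint disjoint_iff)
  also have "sum T ?Out = sum T ?In"
  proof (rule sum.reindex_bij_witness[where i = "\<lambda>A1. A - A1" and j = "\<lambda>A1. A - A1"])
    have card_compl: "card (A - A1) = n" if "A1 \<subseteq> A" "card A1 = n" for A1
      using that assms(1,2) by (simp add: card_Diff_subset finite_subset)
    show "A - (A - A1) = A1" if "A1 \<in> ?Out" for A1
      using that by auto
    show "A - A1 \<in> ?In" if "A1 \<in> ?Out" for A1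
      using that assms(3) card_compl by auto
    show "A - (A - A1) = A1" if "A1 \<in> ?In" for A1
      using that by auto
    show "A - A1 \<in> ?Out" if "A1 \<in> ?In" for A1
      using that card_compl by auto
    show "T (A - A1) = T A1" if "A1 \<in> ?Out" for A1
      using that assms(4) by auto
  qed
  finally show ?thesis
    by (simp add: mult_2)
qed

section \<open>Permanents of Walsh tables\<close>

definition walsh_perm :: "nat set \<Rightarrow> nat set \<Rightarrow> (nat \<Rightarrow> nat) \<Rightarrow> int" where
  "walsh_perm A B \<alpha> = (\<Sum>f\<in>bijs A B. \<Prod>x\<in>A. walsh (\<alpha> x) (f x))"

definition bit_count :: "(nat \<Rightarrow> nat) \<Rightarrow> nat \<Rightarrow> nat set \<Rightarrow> nat" where
  "bit_count \<alpha> l A = card {x \<in> A. bit (\<alpha> x) l}"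

definition balanced :: "nat set \<Rightarrow> (nat \<Rightarrow> nat) \<Rightarrow> nat set \<Rightarrow> bool" where
  "balanced L \<alpha> A \<longleftrightarrow> (\<forall>l\<in>L. even (bit_count \<alpha> l A))"

lemma bit_count_Diff:
  assumes "finite A" "A1 \<subseteq> A"
  shows "bit_count \<alpha> l A = bit_count \<alpha> l A1 + bit_count \<alpha> l (A - A1)"
proof -
  have "{x \<in> A. bit (\<alpha> x) l} = {x \<in> A1. bit (\<alpha> x) l} \<union> {x \<in> A - A1. bit (\<alpha> x) l}"
    using assms(2) by auto
  moreover have "card ({x \<in> A1. bit (\<alpha> x) l} \<union> {x \<in> A - A1. bit (\<alpha> x) l}) =
      card {x \<in> A1. bit (\<alpha> x) l} + card {x \<in> A - A1. bit (\<alpha> x) l}"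
    using assms by (intro card_Un_disjoint) (auto intro: finite_subset[OF _ assms(1)])
  ultimately show ?thesis
    unfolding bit_count_def by simp
qed

lemma prod_walsh_exp_right:
  "finite A \<Longrightarrow> (\<Prod>x\<in>A. walsh (\<alpha> x) (2 ^ l)) = (-1) ^ bit_count \<alpha> l A"
  by (simp add: walsh_exp_right prod_minus_one_if bit_count_def)

lemma walsh_perm_eq_0_if_odd_bit_count:
  assumes "finite A" "l < q" "odd (bit_count \<alpha> l A)"
  shows "walsh_perm A {..<2 ^ q} \<alpha> = 0"
proof -
  let ?h = "\<lambda>y::nat. xor y (2 ^ l)"
  have "(2::nat) ^ l < 2 ^ q"
    using assms(2) by simp
  then have h: "bij_betw ?h {..<2 ^ q} {..<2 ^ q}"
    by (intro bij_betw_byWitness[where f' = ?h]) (auto simp: xor.assoc intro: xor_less_exp_nat)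
  have "walsh_perm A {..<2 ^ q} \<alpha> =
      (\<Sum>f\<in>bijs A {..<2 ^ q}. \<Prod>x\<in>A. walsh (\<alpha> x) (restrict (?h \<circ> f) A x))"
    unfolding walsh_perm_def
    by (rule sum.reindex_bij_betw[OF bij_betw_compose_bijs[OF h], symmetric])
  also have "\<dots> = (\<Sum>f\<in>bijs A {..<2 ^ q}. (\<Prod>x\<in>A. walsh (\<alpha> x) (f x)) * (\<Prod>x\<in>A. walsh (\<alpha> x) (2 ^ l)))"
    by (intro sum.cong refl) (simp add: walsh_xor_right prod.distrib)
  also have "\<dots> = - walsh_perm A {..<2 ^ q} \<alpha>"
    using assms by (simp add: prod_walsh_exp_right walsh_perm_def sum_negf)
  finally show ?thesis
    by simp
qed

text \<open>Induction on \<open>L\<close>: double counting the pairs \<open>(A1, x)\<close> with \<open>x \<in> A1\<close> and bit \<open>l\<close> of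
  \<open>\<alpha> x\<close> set shows that an even number of the sets counted for \<open>L\<close> violate the condition at \<open>l\<close>.\<close>
lemma odd_card_balanced_half_supersets:
  assumes A: "finite A" "card A = 2 * 2 ^ q" "balanced {..<q} \<alpha> A"
    and "L \<subseteq> {..<q}" "U \<subseteq> A" "U \<noteq> {}" "card U + card L \<le> q + 1"
  shows "odd (card {A1. U \<subseteq> A1 \<and> A1 \<subseteq> A \<and> card A1 = 2 ^ q \<and> balanced L \<alpha> A1})"
proof -
  have "finite L"
    using assms(4) by (rule finite_subset) simp
  then show ?thesis
    using assms(4-7)
  proof (induction L arbitrary: U rule: finite_induct)
    case empty
    have "card U \<le> 2 ^ q"
      using empty.prems(4) Suc_leI[OF less_exp[of q]] by simp
    then show ?case
      using odd_card_half_supersets[OF A(1,2) empty.prems(2,3)] by (simp add: balanced_def)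
  next
    case (insert l L)
    define F where "F = {A1. U \<subseteq> A1 \<and> A1 \<subseteq> A \<and> card A1 = 2 ^ q \<and> balanced L \<alpha> A1}"
    define Al where "Al = {x \<in> A. bit (\<alpha> x) l}"
    have fin_F: "finite F"
      using A(1) by (intro finite_subset[of F "Pow A"]) (auto simp: F_def)
    have fin_Al: "finite Al"
      using A(1) by (simp add: Al_def)
    have odd_F: "odd (card F)"
      unfolding F_def using insert by (intro insert.IH) auto
    have odd_F_mem: "odd (card {A1 \<in> F. x \<in> A1})" if "x \<in> A" for x
    proof -
      have "card (insert x U) \<le> card U + 1"
        using finite_subset[OF insert.prems(2) A(1)] by (simp add: card_insert_if)
      then have "odd (card {A1. insert x U \<subseteq> A1 \<and> A1 \<subseteq> A \<and> card A1 = 2 ^ q \<and> balanced L \<alpha> A1})"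
        using insert.prems insert.hyps that by (intro insert.IH) auto
      moreover have "{A1 \<in> F. x \<in> A1} = {A1. insert x U \<subseteq> A1 \<and> A1 \<subseteq> A \<and> card A1 = 2 ^ q \<and> balanced L \<alpha> A1}"
        by (auto simp: F_def)
      ultimately show ?thesis
        by simp
    qed
    have "{x \<in> Al. odd (card {A1 \<in> F. x \<in> A1})} = Al"
      using odd_F_mem by (auto simp: Al_def)
    moreover have "even (card Al)"
      using A(3) insert.prems(1) by (auto simp: balanced_def bit_count_def Al_def)
    ultimately have even_Al: "even (\<Sum>x\<in>Al. card {A1 \<in> F. x \<in> A1})"
      using even_sum_iff_even_card_odd[OF fin_Al, of "\<lambda>x. card {A1 \<in> F. x \<in> A1}"] by simp
    have "bit_count \<alpha> l A1 = card (A1 \<inter> Al)" if "A1 \<in> F" for A1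
      using that by (auto simp: bit_count_def Al_def F_def intro: arg_cong[where f = card])
    then have "(\<Sum>A1\<in>F. bit_count \<alpha> l A1) = (\<Sum>x\<in>Al. card {A1 \<in> F. x \<in> A1})"
      using sum_card_Int_eq_sum_card[OF fin_F fin_Al] by simp
    with even_Al odd_F have "odd (\<Sum>A1\<in>F. bit_count \<alpha> l A1 + 1)"
      by (simp add: sum_Suc)
    then have "odd (card {A1 \<in> F. even (bit_count \<alpha> l A1)})"
      using even_sum_iff_even_card_odd[OF fin_F, of "\<lambda>A1. bit_count \<alpha> l A1 + 1"] by simp
    moreover have "{A1 \<in> F. even (bit_count \<alpha> l A1)} =
        {A1. U \<subseteq> A1 \<and> A1 \<subseteq> A \<and> card A1 = 2 ^ q \<and> balanced (insert l L) \<alpha> A1}"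
      by (auto simp: F_def balanced_def)
    ultimately show ?case
      by simp
  qed
qed

lemma walsh_perm_split:
  assumes "finite A"
  shows "walsh_perm A {..<2 * 2 ^ q} \<alpha> =
    (\<Sum>A1 | A1 \<subseteq> A \<and> card A1 = 2 ^ q.
       walsh_perm A1 {..<2 ^ q} \<alpha> * ((-1) ^ bit_count \<alpha> q (A - A1) * walsh_perm (A - A1) {..<2 ^ q} \<alpha>))"
proof -
  let ?n = "2 ^ q :: nat"
  have "(+) ?n ` {..<?n} = {?n..<2 * ?n}"
  proof (intro set_eqI iffI)
    fix x assume "x \<in> {?n..<2 * ?n}"
    then show "x \<in> (+) ?n ` {..<?n}"
      by (intro image_eqI[of _ _ "x - ?n"]) auto
  qed auto
  then have shift: "bij_betw ((+) ?n) {..<?n} {?n..<2 * ?n}"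
    unfolding bij_betw_def by simp
  have high: "(\<Sum>g\<in>bijs B {?n..<2 * ?n}. \<Prod>x\<in>B. walsh (\<alpha> x) (g x)) =
      (-1) ^ bit_count \<alpha> q B * walsh_perm B {..<?n} \<alpha>" if "finite B" for B
  proof -
    have "(\<Sum>g\<in>bijs B {?n..<2 * ?n}. \<Prod>x\<in>B. walsh (\<alpha> x) (g x)) =
        (\<Sum>g\<in>bijs B {..<?n}. \<Prod>x\<in>B. walsh (\<alpha> x) (restrict ((+) ?n \<circ> g) B x))"
      by (rule sum.reindex_bij_betw[OF bij_betw_compose_bijs[OF shift], symmetric])
    also have "\<dots> = (\<Sum>g\<in>bijs B {..<?n}. (\<Prod>x\<in>B. walsh (\<alpha> x) ?n) * (\<Prod>x\<in>B. walsh (\<alpha> x) (g x)))"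
      by (intro sum.cong refl)
        (auto simp: walsh_add_exp_right bijs_def PiE_def Pi_iff simp flip: prod.distrib intro!: prod.cong)
    also have "\<dots> = (-1) ^ bit_count \<alpha> q B * walsh_perm B {..<?n} \<alpha>"
      using that by (simp add: prod_walsh_exp_right walsh_perm_def sum_distrib_left)
    finally show ?thesis .
  qed
  have disj: "{..<?n} \<inter> {?n..<2 * ?n} = {}"
    by auto
  have "{..<2 * ?n} = {..<?n} \<union> {?n..<2 * ?n}"
    by auto
  then have "walsh_perm A {..<2 * ?n} \<alpha> = (\<Sum>A1 | A1 \<subseteq> A \<and> card A1 = ?n.
      walsh_perm A1 {..<?n} \<alpha> * (\<Sum>g\<in>bijs (A - A1) {?n..<2 * ?n}. \<Prod>x\<in>A - A1. walsh (\<alpha> x) (g x)))"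
    unfolding walsh_perm_def
    using sum_bijs_Un[OF assms finite_lessThan finite_atLeastLessThan disj] by simp
  also have "\<dots> = (\<Sum>A1 | A1 \<subseteq> A \<and> card A1 = ?n.
      walsh_perm A1 {..<?n} \<alpha> * ((-1) ^ bit_count \<alpha> q (A - A1) * walsh_perm (A - A1) {..<?n} \<alpha>))"
    using assms by (intro sum.cong refl) (simp add: high)
  finally show ?thesis .
qed

lemma walsh_perm_double_eq_sum_balanced:
  assumes "finite A" "card A = 2 * 2 ^ q" "balanced {..<Suc q} \<alpha> A" "a \<in> A"
  shows "walsh_perm A {..<2 * 2 ^ q} \<alpha> =
    2 * (\<Sum>A1 | {a} \<subseteq> A1 \<and> A1 \<subseteq> A \<and> card A1 = 2 ^ q \<and> balanced {..<q} \<alpha> A1.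
       walsh_perm A1 {..<2 ^ q} \<alpha> * ((-1) ^ bit_count \<alpha> q (A - A1) * walsh_perm (A - A1) {..<2 ^ q} \<alpha>))"
proof -
  let ?n = "2 ^ q :: nat"
  let ?T = "\<lambda>A1. walsh_perm A1 {..<?n} \<alpha> * ((-1) ^ bit_count \<alpha> q (A - A1) * walsh_perm (A - A1) {..<?n} \<alpha>)"
  let ?In = "{A1. A1 \<subseteq> A \<and> card A1 = ?n \<and> a \<in> A1}"
  have sym: "?T (A - A1) = ?T A1" if "A1 \<subseteq> A" for A1
  proof -
    have "even (bit_count \<alpha> q A1 + bit_count \<alpha> q (A - A1))"
      using assms(3) bit_count_Diff[OF assms(1) that] by (simp add: balanced_def)
    then have "(-1::int) ^ bit_count \<alpha> q A1 = (-1) ^ bit_count \<alpha> q (A - A1)"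
      by (auto simp: minus_one_power_iff)
    moreover have "A - (A - A1) = A1"
      using that by auto
    ultimately show ?thesis
      by simp
  qed
  have vanish: "?T A1 = 0" if A1: "A1 \<in> ?In" and unbalanced: "\<not> balanced {..<q} \<alpha> A1" for A1
  proof -
    obtain l where "l < q" "odd (bit_count \<alpha> l A1)"
      using unbalanced by (auto simp: balanced_def)
    then have "walsh_perm A1 {..<?n} \<alpha> = 0"
      using A1 assms(1) by (intro walsh_perm_eq_0_if_odd_bit_count) (auto intro: finite_subset)
    then show ?thesis
      by simp
  qed
  have "walsh_perm A {..<2 * ?n} \<alpha> = (\<Sum>A1 | A1 \<subseteq> A \<and> card A1 = ?n. ?T A1)"
    using walsh_perm_split[OF assms(1)] by simp
  also have "\<dots> = 2 * sum ?T ?In"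
    using assms(1,2,4) sym by (rule sum_half_subsets_complement)
  also have "sum ?T ?In = (\<Sum>A1 | {a} \<subseteq> A1 \<and> A1 \<subseteq> A \<and> card A1 = ?n \<and> balanced {..<q} \<alpha> A1. ?T A1)"
    using assms(1) vanish by (intro sum.mono_neutral_right) (auto intro: finite_subset[of _ "Pow A"])
  finally show ?thesis .
qed

lemma walsh_perm_exp_times_odd:
  assumes "finite A" "card A = 2 ^ q" "balanced {..<q} \<alpha> A"
  shows "\<exists>w. odd w \<and> walsh_perm A {..<2 ^ q} \<alpha> = 2 ^ (2 ^ q - 1) * w"
  using assms
proof (induction q arbitrary: A)
  case 0
  then obtain a where "A = {a}"
    by (auto simp: card_Suc_eq)
  then show ?case
    by (simp add: walsh_perm_def bijs_singleton lessThan_Suc)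
next
  case (Suc q)
  let ?n = "2 ^ q :: nat"
  let ?G = "\<lambda>a. {A1. {a} \<subseteq> A1 \<and> A1 \<subseteq> A \<and> card A1 = ?n \<and> balanced {..<q} \<alpha> A1}"
  let ?T = "\<lambda>A1. walsh_perm A1 {..<?n} \<alpha> * ((-1) ^ bit_count \<alpha> q (A - A1) * walsh_perm (A - A1) {..<?n} \<alpha>)"
  have card_A: "card A = 2 * ?n"
    using Suc.prems(2) by simp
  then obtain a where a: "a \<in> A"
    by fastforce
  have "\<exists>w. odd w \<and> sum ?T (?G a) = 2 ^ (2 * ?n - 2) * w"
  proof (rule sum_odd_multiples)
    show "finite (?G a)"
      using Suc.prems(1) by (auto intro: finite_subset[of _ "Pow A"])
    show "odd (card (?G a))"
      using Suc.prems a by (intro odd_card_balanced_half_supersets) (auto simp: balanced_def)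
    fix A1 assume A1: "A1 \<in> ?G a"
    then have fin: "finite A1" "finite (A - A1)" and card: "card A1 = ?n" "card (A - A1) = ?n"
      using Suc.prems(1) card_A by (auto simp: card_Diff_subset finite_subset)
    have "balanced {..<q} \<alpha> (A - A1)"
      using A1 Suc.prems(1,3) bit_count_Diff[OF Suc.prems(1), of A1 \<alpha>] by (auto simp: balanced_def)
    then obtain w1 w2 where "odd w1" "walsh_perm A1 {..<?n} \<alpha> = 2 ^ (?n - 1) * w1"
        and "odd w2" "walsh_perm (A - A1) {..<?n} \<alpha> = 2 ^ (?n - 1) * w2"
      using Suc.IH[OF fin(1) card(1)] Suc.IH[OF fin(2) card(2)] A1 by auto
    moreover have "(2::int) ^ (?n - 1) * 2 ^ (?n - 1) = 2 ^ (2 * ?n - 2)"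
      by (simp flip: power_add)
    ultimately show "\<exists>w. odd w \<and> ?T A1 = 2 ^ (2 * ?n - 2) * w"
      by (intro exI[of _ "(-1) ^ bit_count \<alpha> q (A - A1) * w1 * w2"]) (simp add: algebra_simps)
  qed
  moreover have "walsh_perm A {..<2 ^ Suc q} \<alpha> = 2 * sum ?T (?G a)"
    using walsh_perm_double_eq_sum_balanced[OF Suc.prems(1) card_A Suc.prems(3) a] by simp
  moreover have "2 * (2::int) ^ (2 * ?n - 2) = 2 ^ (2 ^ Suc q - 1)"
  proof -
    have "(1::nat) \<le> ?n"
      by simp
    then have "Suc (2 * ?n - 2) = 2 * ?n - 1"
      by linarith
    then show ?thesis
      by (metis power_Suc)
  qed
  ultimately show ?case
    by (metis mult.assoc)
qed

section \<open>Suppression\<close>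

lemma perm_mat_eq_sum_bijs:
  "perm_mat n A = (\<Sum>f\<in>bijs {..<n} {..<n}. \<Prod>i<n. A i (f i))"
proof -
  let ?S = "{..<n}"
  have "bij_betw (\<lambda>\<sigma>. restrict \<sigma> ?S) {\<sigma>. \<sigma> permutes ?S} (bijs ?S ?S)"
  proof (rule bij_betw_byWitness[where f' = "\<lambda>f x. if x \<in> ?S then f x else x"])
    show "\<forall>\<sigma>\<in>{\<sigma>. \<sigma> permutes ?S}. (\<lambda>x. if x \<in> ?S then restrict \<sigma> ?S x else x) = \<sigma>"
      by (auto simp: fun_eq_iff permutes_not_in)
    show "\<forall>f\<in>bijs ?S ?S. restrict (\<lambda>x. if x \<in> ?S then f x else x) ?S = f"
      by (auto simp: bijs_def fun_eq_iff PiE_def extensional_def)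
    show "(\<lambda>\<sigma>. restrict \<sigma> ?S) ` {\<sigma>. \<sigma> permutes ?S} \<subseteq> bijs ?S ?S"
      by (auto intro: restrict_in_bijs permutes_imp_bij)
    show "(\<lambda>f x. if x \<in> ?S then f x else x) ` bijs ?S ?S \<subseteq> {\<sigma>. \<sigma> permutes ?S}"
    proof clarify
      fix f assume "f \<in> bijs ?S ?S"
      then have "bij_betw (\<lambda>x. if x \<in> ?S then f x else x) ?S ?S"
        by (auto simp: bijs_def intro: bij_betw_cong[THEN iffD1, rotated])
      then show "(\<lambda>x. if x \<in> ?S then f x else x) permutes ?S"
        by (rule bij_imp_permutes) simp
    qed
  qed
  then have "(\<Sum>\<sigma> | \<sigma> permutes ?S. \<Prod>i<n. A i (restrict \<sigma> ?S i)) = (\<Sum>f\<in>bijs ?S ?S. \<Prod>i<n. A i (f i))"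
    by (rule sum.reindex_bij_betw)
  moreover have "(\<Sum>\<sigma> | \<sigma> permutes ?S. \<Prod>i<n. A i (restrict \<sigma> ?S i)) = perm_mat n A"
    unfolding perm_mat_def by (intro sum.cong refl prod.cong) auto
  ultimately show ?thesis
    by simp
qed

lemma perm_mat_cong:
  assumes "\<And>i j. i < n \<Longrightarrow> j < n \<Longrightarrow> A i j = B i j"
  shows "perm_mat n A = perm_mat n B"
  unfolding perm_mat_def
proof (intro sum.cong refl prod.cong)
  fix \<sigma> i assume "\<sigma> \<in> {\<sigma>. \<sigma> permutes {..<n}}" "i \<in> {..<n}"
  then show "A i (\<sigma> i) = B i (\<sigma> i)"
    using assms permutes_in_image[of \<sigma> "{..<n}" i] by auto
qed

lemma perm_mat_mult_rows: "perm_mat n (\<lambda>i j. r i * A i j) = (\<Prod>i<n. r i) * perm_mat n A"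
  unfolding perm_mat_def by (simp add: prod.distrib sum_distrib_left)

lemma amplitude_eq_0_iff: "amplitude m U s t = 0 \<longleftrightarrow> perm_mat (length s) (scatter U s t) = 0"
  by (simp add: amplitude_def)

lemma bit_xor_list_iff: "bit (xor_list xs) l \<longleftrightarrow> odd (length (filter (\<lambda>x. bit x l) xs))"
  by (induction xs) (auto simp: xor_list_def bit_xor_iff)

lemma walsh_perm_eq_0_iff_xor_list:
  assumes "length xs = 2 ^ q" "\<forall>x\<in>set xs. x < 2 ^ q"
  shows "walsh_perm {..<2 ^ q} {..<2 ^ q} (nth xs) = 0 \<longleftrightarrow> xor_list xs \<noteq> 0"
proof -
  have count: "bit_count (nth xs) l {..<2 ^ q} = length (filter (\<lambda>x. bit x l) xs)" for l
    unfolding bit_count_def length_filter_conv_card assms(1)[symmetric] by (rule arg_cong[where f = card]) auto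
  have low: "l < q" if "bit (xor_list xs) l" for l
  proof -
    from that have "filter (\<lambda>x. bit x l) xs \<noteq> []"
      by (auto simp: bit_xor_list_iff)
    then obtain x where "x \<in> set xs" "bit x l"
      by (auto simp: filter_empty_conv)
    with assms(2) show ?thesis
      using bit_imp_less_exp_nat by blast
  qed
  show ?thesis
  proof
    assume "walsh_perm {..<2 ^ q} {..<2 ^ q} (nth xs) = 0"
    then have "\<not> balanced {..<q} (nth xs) {..<2 ^ q}"
      using walsh_perm_exp_times_odd[of "{..<2 ^ q}" q "nth xs"] by fastforce
    then obtain l where "bit (xor_list xs) l"
      by (auto simp: balanced_def count bit_xor_list_iff)
    then show "xor_list xs \<noteq> 0"
      by (intro notI) simp
  next
    assume "xor_list xs \<noteq> 0"
    then obtain l where "bit (xor_list xs) l"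
      using bit_eq_iff[of "xor_list xs" 0] by auto
    then show "walsh_perm {..<2 ^ q} {..<2 ^ q} (nth xs) = 0"
      using low by (intro walsh_perm_eq_0_if_odd_bit_count) (auto simp: count bit_xor_list_iff)
  qed
qed

lemma perm_scatter_sylvester_eq_0_iff:
  assumes "c < 2 ^ k" "length t = 2 ^ q" "set t \<subseteq> {1..2 ^ (k + q)}"
  shows "perm_mat (2 ^ q) (scatter (U_had (k + q)) (map (\<lambda>i. i + 2 ^ q * c) [1..<2 ^ q + 1]) t) = 0
    \<longleftrightarrow> walsh_perm {..<2 ^ q} {..<2 ^ q} (nth (map (\<lambda>x. beta q (x - 1)) t)) = 0"
proof -
  let ?n = "2 ^ q :: nat"
  let ?s = "map (\<lambda>i. i + ?n * c) [1..<?n + 1]"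
  let ?xs = "map (\<lambda>x. beta q (x - 1)) t"
  define r where "r i = walsh ((t ! i - 1) div ?n) c / sqrt (2 ^ (k + q))" for i
  have entry: "scatter (U_had (k + q)) ?s t i j = r i * walsh (?xs ! i) j" if "i < ?n" "j < ?n" for i j
  proof -
    have "t ! i \<in> set t"
      using assms(2) that(1) by simp
    with assms(3) have t_i: "1 \<le> t ! i" "t ! i \<le> 2 ^ (k + q)"
      by auto
    have s_j: "?s ! j = Suc j + ?n * c"
      using that(2) by (simp add: nth_upt del: upt_Suc)
    have "Suc j + ?n * c \<le> ?n * (c + 1)"
      using that(2) by simp
    also have "\<dots> \<le> ?n * 2 ^ k"
      using assms(1) by (intro mult_le_mono2) simp
    also have "\<dots> = 2 ^ (k + q)"
      by (simp add: power_add)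
    finally have "Suc j + ?n * c \<le> 2 ^ (k + q)" .
    then have "sylvester (k + q) (t ! i) (?s ! j) = walsh (t ! i - 1) (j + ?n * c)"
      using t_i s_j by (simp add: sylvester_eq_walsh)
    also have "walsh (t ! i - 1) (j + ?n * c) = walsh (?xs ! i) j * walsh ((t ! i - 1) div ?n) c"
      using walsh_mod_div[of "t ! i - 1" "j + ?n * c" q] that assms(2) by (simp add: beta_def)
    finally show ?thesis
      by (simp add: scatter_def U_had_def r_def)
  qed
  have "perm_mat ?n (scatter (U_had (k + q)) ?s t) = perm_mat ?n (\<lambda>i j. r i * walsh (?xs ! i) j)"
    by (rule perm_mat_cong) (rule entry)
  also have "\<dots> = (\<Prod>i<?n. r i) * walsh_perm {..<?n} {..<?n} (nth ?xs)"
    unfolding perm_mat_mult_rows perm_mat_eq_sum_bijs walsh_perm_def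
    by (simp add: of_int_sum of_int_prod)
  moreover have "(\<Prod>i<?n. r i) \<noteq> 0"
    by (simp add: r_def walsh_neq_0)
  ultimately show ?thesis
    by simp
qed

theorem proposition7:
  fixes k q c :: nat and t :: "nat list"
  assumes "c \<le> 2 ^ k - 1"
  assumes "is_state (2 ^ (k + q)) (2 ^ q) t"
  shows "suppressed (2 ^ (k + q)) (U_had (k + q))
           (map (\<lambda>i. i + 2 ^ q * c) [1..<2 ^ q + 1]) t
         \<longleftrightarrow> xor_list (map (\<lambda>x. beta q (x - 1)) t) \<noteq> 0"
proof -
  have "0 < (2::nat) ^ k"
    by simp
  with assms(1) have c: "c < 2 ^ k"
    by linarith
  have t: "length t = 2 ^ q" "set t \<subseteq> {1..2 ^ (k + q)}"
    using assms(2) by (auto simp: is_state_def)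
  have "suppressed (2 ^ (k + q)) (U_had (k + q)) (map (\<lambda>i. i + 2 ^ q * c) [1..<2 ^ q + 1]) t
      \<longleftrightarrow> perm_mat (2 ^ q) (scatter (U_had (k + q)) (map (\<lambda>i. i + 2 ^ q * c) [1..<2 ^ q + 1]) t) = 0"
    by (simp add: suppressed_def amplitude_eq_0_iff)
  also have "\<dots> \<longleftrightarrow> walsh_perm {..<2 ^ q} {..<2 ^ q} (nth (map (\<lambda>x. beta q (x - 1)) t)) = 0"
    using c t by (rule perm_scatter_sylvester_eq_0_iff)
  also have "\<dots> \<longleftrightarrow> xor_list (map (\<lambda>x. beta q (x - 1)) t) \<noteq> 0"
    using t(1) by (intro walsh_perm_eq_0_iff_xor_list) (auto simp: beta_def)
  finally show ?thesis .
qed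

end
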